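(* Let $\alpha,\beta\in\mathbb{R}$ with $\beta-\alpha-2\neq 0$, and set $\mathbf C_{\alpha,\beta}=\frac{(\beta-3)(2\alpha-\beta+1)}{4}$. For every $f\in C_0^\infty((0,\infty))$ (complex-valued), with $f^\#(r)=f''(r)+\frac{\beta-2}{r}f'(r)+\frac{(\beta-3)^2}{4r^2}f(r)$, there holds \[ \mathbf C_{\alpha,\beta}^2\left\|\frac{f}{r^2}\right\|_{L^2_\beta}^2=\left\|\mathfrak L_\alpha f\right\|_{L^2_\beta}^2-\left(1+\frac{2\mathbf C_{\alpha,\beta}}{(\beta-\alpha-2)^2}\right)\left\|\mathfrak L_\alpha f+\mathbf C_{\alpha,\beta}\frac{f}{r^2}\right\|_{L^2_\beta}^2+\frac{2\mathbf C_{\alpha,\beta}}{(\beta-\alpha-2)^2}\left\|f^\#\right\|_{L^2_\beta}^2 . \]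
   Context: For $\beta\in\mathbb{R}$, $L^2_\beta$ denotes the weighted space on $(0,\infty)$ with norm $\|g\|_{L^2_\beta}^2=\int_0^\infty |g(r)|^2 r^\beta\,dr$. For $\alpha\in\mathbb{R}$, $\mathfrak L_\alpha$ is the operator $\mathfrak L_\alpha f(r)=f''(r)+\frac{\alpha}{r}f'(r)$. Expressions such as $f/r^2$ denote the function $r\mapsto f(r)/r^2$. *)

theory Defs
  imports "HOL-Analysis.Analysis"
begin

definition vd :: "(real \<Rightarrow> complex) \<Rightarrow> real \<Rightarrow> complex" where
  "vd g x = vector_derivative g (at x)"

definition smooth_compact_pos :: "(real \<Rightarrow> complex) \<Rightarrow> bool" where
  "smooth_compact_pos f \<longleftrightarrow>
     (\<forall>n. \<forall>r::real. r > 0 \<longrightarrow> ((vd ^^ n) f) differentiable (at r)) \<and>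
     (\<exists>a b. 0 < a \<and> a \<le> b \<and> (\<forall>r. r \<notin> {a..b} \<longrightarrow> f r = 0))"

definition wnorm2 :: "real \<Rightarrow> (real \<Rightarrow> complex) \<Rightarrow> real" where
  "wnorm2 \<beta> g = integral {0<..} (\<lambda>r. (cmod (g r))\<^sup>2 * r powr \<beta>)"

definition Lop :: "real \<Rightarrow> (real \<Rightarrow> complex) \<Rightarrow> real \<Rightarrow> complex" where
  "Lop \<alpha> f r = vd (vd f) r + complex_of_real (\<alpha> / r) * vd f r"

definition Cab :: "real \<Rightarrow> real \<Rightarrow> real" where
  "Cab \<alpha> \<beta> = (\<beta> - 3) * (2 * \<alpha> - \<beta> + 1) / 4"

definition fsharp :: "real \<Rightarrow> (real \<Rightarrow> complex) \<Rightarrow> real \<Rightarrow> complex" where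
  "fsharp \<beta> f r = vd (vd f) r + complex_of_real ((\<beta> - 2) / r) * vd f r
                   + complex_of_real ((\<beta> - 3)\<^sup>2 / (4 * r\<^sup>2)) * f r"

end

(* Each norm in the identity has the form ||a f'' + (b/r) f' + (e/r^2) f||^2 in L^2_beta, a quadratic
   form in (f, f', f'') whose cross terms are the weighted integrals of Re (f' conj f), Re (f'' conj f')
   and Re (f'' conj f). Integration by parts, without boundary terms since f has compact support in
   (0, infinity), expresses these through ||f||^2 in L^2_(beta-4) and ||f'||^2 in L^2_(beta-2). Hence every
   such norm is a diagonal form in ||f''||^2, ||f'||^2, ||f||^2 with the appropriate weights, and the
   theorem reduces to a polynomial identity in alpha and beta. *)

theory Submission
  imports Defs
begin

(* For complex numbers, g r \<bullet> h r = Re (g r * cnj (h r)): wprod is the real inner product of L^2_gamma. *)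
definition wprod :: "real \<Rightarrow> (real \<Rightarrow> complex) \<Rightarrow> (real \<Rightarrow> complex) \<Rightarrow> real" where
  "wprod \<gamma> g h = integral {0<..} (\<lambda>r. (g r \<bullet> h r) * r powr \<gamma>)"

lemma wnorm2_eq_wprod: "wnorm2 \<beta> g = wprod \<beta> g g"
  by (simp add: wnorm2_def wprod_def power2_norm_eq_inner)

lemma wprod_commute: "wprod \<gamma> g h = wprod \<gamma> h g"
  by (simp add: wprod_def inner_commute)

lemma has_integral_pos_reals_if_vanishing_outside:
  fixes h :: "real \<Rightarrow> real"
  assumes "0 < c" "continuous_on {c..d} h" "\<And>r. r > 0 \<Longrightarrow> r \<notin> {c..d} \<Longrightarrow> h r = 0"
  shows "(h has_integral integral {c..d} h) {0<..}"
proof -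
  have "(h has_integral integral {c..d} h) {c..d}"
    by (rule integrable_integral[OF integrable_continuous_interval[OF assms(2)]])
  then have "((\<lambda>x. if x \<in> {c..d} then h x else 0) has_integral integral {c..d} h) UNIV"
    by (subst has_integral_restrict_UNIV)
  moreover have "(\<lambda>x. if x \<in> {c..d} then h x else 0) = (\<lambda>x. if x \<in> {0<..} then h x else 0)"
    using assms(1,3) by (auto simp: fun_eq_iff)
  ultimately show ?thesis by (metis has_integral_restrict_UNIV)
qed

lemma wprod_interval:
  assumes "0 < c" "continuous_on {c..d} g" "continuous_on {c..d} h"
    and "\<And>r. r > 0 \<Longrightarrow> r \<notin> {c..d} \<Longrightarrow> g r \<bullet> h r = 0"
  shows wprod_has_integral: "((\<lambda>r. (g r \<bullet> h r) * r powr \<gamma>) has_integral wprod \<gamma> g h) {0<..}"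
    and wprod_eq_integral_interval: "wprod \<gamma> g h = integral {c..d} (\<lambda>r. (g r \<bullet> h r) * r powr \<gamma>)"
proof -
  have "continuous_on {c..d} (\<lambda>r. (g r \<bullet> h r) * r powr \<gamma>)"
    using assms(1) by (intro continuous_intros assms(2,3)) auto
  then have "((\<lambda>r. (g r \<bullet> h r) * r powr \<gamma>) has_integral integral {c..d} (\<lambda>r. (g r \<bullet> h r) * r powr \<gamma>)) {0<..}"
    using assms(1,4) by (intro has_integral_pos_reals_if_vanishing_outside) auto
  then show "wprod \<gamma> g h = integral {c..d} (\<lambda>r. (g r \<bullet> h r) * r powr \<gamma>)"
    unfolding wprod_def by (rule integral_unique)
  with \<open>(_ has_integral _) _\<close> show "((\<lambda>r. (g r \<bullet> h r) * r powr \<gamma>) has_integral wprod \<gamma> g h) {0<..}"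
    by simp
qed

lemma integral_deriv_mult_powr:
  fixes p p' :: "real \<Rightarrow> real"
  assumes "0 < c" "c \<le> d" "\<And>x. x \<in> {c..d} \<Longrightarrow> (p has_real_derivative p' x) (at x)"
    and "continuous_on {c..d} p'" "p c = 0" "p d = 0"
  shows "integral {c..d} (\<lambda>x. p' x * x powr \<gamma>) = - \<gamma> * integral {c..d} (\<lambda>x. p x * x powr (\<gamma> - 1))"
proof -
  have pos: "\<And>x. x \<in> {c..d} \<Longrightarrow> 0 < x" using assms(1) by auto
  have "continuous_on {c..d} p"
    using assms(3) by (meson DERIV_continuous continuous_at_imp_continuous_on)
  then have int: "(\<lambda>x. p x * x powr (\<gamma> - 1)) integrable_on {c..d}"
    "(\<lambda>x. p' x * x powr \<gamma>) integrable_on {c..d}"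
    using pos assms(1) by (auto intro!: integrable_continuous_interval continuous_intros assms(4))
  have "((\<lambda>x. p' x * x powr \<gamma> + \<gamma> * (p x * x powr (\<gamma> - 1))) has_integral
        p d * d powr \<gamma> - p c * c powr \<gamma>) {c..d}"
  proof (rule fundamental_theorem_of_calculus[OF assms(2)])
    fix x assume x: "x \<in> {c..d}"
    have "((\<lambda>x. p x * x powr \<gamma>) has_real_derivative p' x * x powr \<gamma> + \<gamma> * (p x * x powr (\<gamma> - 1))) (at x)"
      using assms(3)[OF x] pos[OF x] by (auto intro!: derivative_eq_intros)
    then show "((\<lambda>x. p x * x powr \<gamma>) has_vector_derivative p' x * x powr \<gamma> + \<gamma> * (p x * x powr (\<gamma> - 1)))
        (at x within {c..d})"
      by (simp add: has_real_derivative_iff_has_vector_derivative has_vector_derivative_at_within)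
  qed
  then have "integral {c..d} (\<lambda>x. p' x * x powr \<gamma> + \<gamma> * (p x * x powr (\<gamma> - 1))) = 0"
    using assms(5,6) by (simp add: integral_unique)
  then have "integral {c..d} (\<lambda>x. p' x * x powr \<gamma>) + \<gamma> * integral {c..d} (\<lambda>x. p x * x powr (\<gamma> - 1)) = 0"
    by (simp add: integral_add[OF int(2) integrable_on_mult_right[OF int(1)]])
  then show ?thesis by linarith
qed

lemma has_real_derivative_inner:
  fixes g h :: "real \<Rightarrow> complex"
  assumes "(g has_vector_derivative g') (at x)" "(h has_vector_derivative h') (at x)"
  shows "((\<lambda>t. g t \<bullet> h t) has_real_derivative g' \<bullet> h x + g x \<bullet> h') (at x)"
  using has_derivative_inner[OF assms[unfolded has_vector_derivative_def]]
  unfolding has_field_derivative_def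
  by (rule has_derivative_eq_rhs) (auto simp: fun_eq_iff inner_scaleR_left inner_scaleR_right algebra_simps)

lemma wprod_by_parts:
  fixes g g' h h' :: "real \<Rightarrow> complex"
  assumes "0 < c" "c \<le> d"
    and g': "\<And>r. r > 0 \<Longrightarrow> (g has_vector_derivative g' r) (at r)"
    and h': "\<And>r. r > 0 \<Longrightarrow> (h has_vector_derivative h' r) (at r)"
    and "continuous_on {c..d} g'" "continuous_on {c..d} h'"
    and vanish: "\<And>r. r > 0 \<Longrightarrow> r \<notin> {c<..<d} \<Longrightarrow> g r = 0 \<and> h r = 0"
  shows "wprod \<gamma> g' h + wprod \<gamma> g h' = - \<gamma> * wprod (\<gamma> - 1) g h"
proof -
  have pos: "\<And>x. x \<in> {c..d} \<Longrightarrow> 0 < x" using assms(1) by auto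
  have "continuous_on {c..d} g" "continuous_on {c..d} h"
    using pos g' h' by (meson continuous_at_imp_continuous_on has_vector_derivative_continuous)+
  note cont = this assms(5,6)
  have "integral {c..d} (\<lambda>r. (g' r \<bullet> h r + g r \<bullet> h' r) * r powr \<gamma>)
      = - \<gamma> * integral {c..d} (\<lambda>r. (g r \<bullet> h r) * r powr (\<gamma> - 1))"
    using pos vanish[of c] vanish[of d] assms(1,2)
    by (intro integral_deriv_mult_powr has_real_derivative_inner g' h')
       (auto intro!: continuous_intros cont)
  moreover have "wprod \<gamma> g' h = integral {c..d} (\<lambda>r. (g' r \<bullet> h r) * r powr \<gamma>)"
    and "wprod \<gamma> g h' = integral {c..d} (\<lambda>r. (g r \<bullet> h' r) * r powr \<gamma>)"
    using vanish by (intro wprod_eq_integral_interval assms(1) cont; force)+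
  moreover have "integral {c..d} (\<lambda>r. (g' r \<bullet> h r + g r \<bullet> h' r) * r powr \<gamma>)
      = integral {c..d} (\<lambda>r. (g' r \<bullet> h r) * r powr \<gamma>) + integral {c..d} (\<lambda>r. (g r \<bullet> h' r) * r powr \<gamma>)"
    using pos assms(1) unfolding distrib_right
    by (intro integral_add integrable_continuous_interval continuous_intros cont) auto
  moreover have "wprod (\<gamma> - 1) g h = integral {c..d} (\<lambda>r. (g r \<bullet> h r) * r powr (\<gamma> - 1))"
    using vanish by (intro wprod_eq_integral_interval assms(1) cont) auto
  ultimately show ?thesis by simp
qed

lemma wprod_deriv_self:
  fixes g g' :: "real \<Rightarrow> complex"
  assumes "0 < c" "c \<le> d"
    and "\<And>r. r > 0 \<Longrightarrow> (g has_vector_derivative g' r) (at r)"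
    and "continuous_on {c..d} g'"
    and "\<And>r. r > 0 \<Longrightarrow> r \<notin> {c<..<d} \<Longrightarrow> g r = 0"
  shows "wprod \<gamma> g' g = - \<gamma> / 2 * wprod (\<gamma> - 1) g g"
proof -
  have "wprod \<gamma> g' g + wprod \<gamma> g g' = - \<gamma> * wprod (\<gamma> - 1) g g"
    using assms(5) by (intro wprod_by_parts[OF assms(1-3,3,4,4)]) auto
  then show ?thesis by (simp add: wprod_commute[of \<gamma> g g'])
qed

lemma norm_lincomb3_power2:
  fixes u v w :: complex
  shows "(cmod (of_real a * w + of_real b * v + of_real e * u))\<^sup>2
    = a\<^sup>2 * (w \<bullet> w) + b\<^sup>2 * (v \<bullet> v) + e\<^sup>2 * (u \<bullet> u)
      + 2 * a * b * (w \<bullet> v) + 2 * a * e * (w \<bullet> u) + 2 * b * e * (v \<bullet> u)"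
  by (simp only: cmod_power2) (simp add: inner_complex_def power2_eq_square algebra_simps)

lemma wnorm2_lincomb:
  fixes u v w \<phi> :: "real \<Rightarrow> complex"
  assumes "0 < c" "continuous_on {c..d} u" "continuous_on {c..d} v" "continuous_on {c..d} w"
    and "\<And>r. r > 0 \<Longrightarrow> r \<notin> {c..d} \<Longrightarrow> u r = 0 \<and> v r = 0 \<and> w r = 0"
    and \<phi>: "\<And>r. r > 0 \<Longrightarrow> \<phi> r = of_real a * w r + of_real (b / r) * v r + of_real (e / r\<^sup>2) * u r"
  shows "wnorm2 \<beta> \<phi> =
      a\<^sup>2 * wprod \<beta> w w + b\<^sup>2 * wprod (\<beta> - 2) v v + e\<^sup>2 * wprod (\<beta> - 4) u u
    + 2 * a * b * wprod (\<beta> - 1) w v + 2 * a * e * wprod (\<beta> - 2) w u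
    + 2 * b * e * wprod (\<beta> - 3) v u"
proof -
  note has_int = wprod_has_integral[where c = c and d = d, OF assms(1)]
  have "((\<lambda>r. a\<^sup>2 * ((w r \<bullet> w r) * r powr \<beta>) + b\<^sup>2 * ((v r \<bullet> v r) * r powr (\<beta> - 2))
      + e\<^sup>2 * ((u r \<bullet> u r) * r powr (\<beta> - 4)) + 2 * a * b * ((w r \<bullet> v r) * r powr (\<beta> - 1))
      + 2 * a * e * ((w r \<bullet> u r) * r powr (\<beta> - 2)) + 2 * b * e * ((v r \<bullet> u r) * r powr (\<beta> - 3)))
    has_integral (a\<^sup>2 * wprod \<beta> w w + b\<^sup>2 * wprod (\<beta> - 2) v v + e\<^sup>2 * wprod (\<beta> - 4) u u
      + 2 * a * b * wprod (\<beta> - 1) w v + 2 * a * e * wprod (\<beta> - 2) w u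
      + 2 * b * e * wprod (\<beta> - 3) v u)) {0<..}"
    using assms(5) by (intro has_integral_add has_integral_mult_right has_int assms(2-4); simp)
  moreover have "(cmod (\<phi> r))\<^sup>2 * r powr \<beta> = a\<^sup>2 * ((w r \<bullet> w r) * r powr \<beta>)
      + b\<^sup>2 * ((v r \<bullet> v r) * r powr (\<beta> - 2)) + e\<^sup>2 * ((u r \<bullet> u r) * r powr (\<beta> - 4))
      + 2 * a * b * ((w r \<bullet> v r) * r powr (\<beta> - 1)) + 2 * a * e * ((w r \<bullet> u r) * r powr (\<beta> - 2))
      + 2 * b * e * ((v r \<bullet> u r) * r powr (\<beta> - 3))" if "r > 0" for r
  proof -
    have "r powr (\<beta> - real n) = r powr \<beta> / r ^ n" for n
      using that by (simp add: powr_diff powr_realpow)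
    from this[of 1] this[of 2] this[of 3] this[of 4]
    have powr_shift: "r powr (\<beta> - 1) = r powr \<beta> / r ^ 1" "r powr (\<beta> - 2) = r powr \<beta> / r ^ 2"
      "r powr (\<beta> - 3) = r powr \<beta> / r ^ 3" "r powr (\<beta> - 4) = r powr \<beta> / r ^ 4"
      by simp_all
    show ?thesis
      using that unfolding \<phi>[OF that] norm_lincomb3_power2 powr_shift
      by (simp add: field_simps power2_eq_square eval_nat_numeral)
  qed
  ultimately show ?thesis
    unfolding wnorm2_def by (intro integral_unique) (auto intro: has_integral_cong[THEN iffD1])
qed

lemma vd_eq_0_if_open_vanishing:
  assumes "open S" "\<And>y. y \<in> S \<Longrightarrow> g y = 0" "x \<in> S"
  shows "vd g x = 0"
proof -
  have "(g has_vector_derivative 0) (at x)"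
    by (rule has_vector_derivative_transform_within_open[of "\<lambda>_. 0", OF _ assms(1,3)])
       (use assms(2) in auto)
  then show ?thesis unfolding vd_def by (rule vector_derivative_at)
qed

lemma smooth_compact_posE:
  assumes "smooth_compact_pos f"
  obtains c d where "0 < c" "c \<le> d"
    and "\<And>r. r > 0 \<Longrightarrow> (f has_vector_derivative vd f r) (at r)"
    and "\<And>r. r > 0 \<Longrightarrow> (vd f has_vector_derivative vd (vd f) r) (at r)"
    and "continuous_on {c..d} f" "continuous_on {c..d} (vd f)" "continuous_on {c..d} (vd (vd f))"
    and "\<And>r. r > 0 \<Longrightarrow> r \<notin> {c<..<d} \<Longrightarrow> f r = 0 \<and> vd f r = 0 \<and> vd (vd f) r = 0"
proof -
  from assms obtain a b where ab: "0 < a" "a \<le> b" "\<And>r. r \<notin> {a..b} \<Longrightarrow> f r = 0"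
    and smooth: "\<And>n r. r > 0 \<Longrightarrow> ((vd ^^ n) f) differentiable (at r)"
    unfolding smooth_compact_pos_def by blast
  have diff: "f differentiable (at r)" "vd f differentiable (at r)" "vd (vd f) differentiable (at r)"
    if "r > 0" for r
    using smooth[OF that, of 0] smooth[OF that, of 1] smooth[OF that, of 2]
    by (simp_all add: numeral_2_eq_2)
  define S where "S = {0<..<a} \<union> {b<..}"
  have "open S" unfolding S_def by auto
  have "f r = 0" if "r \<in> S" for r using ab that unfolding S_def by auto
  then have "vd f r = 0" if "r \<in> S" for r using vd_eq_0_if_open_vanishing[OF \<open>open S\<close>] that by blast
  then have "vd (vd f) r = 0" if "r \<in> S" for r using vd_eq_0_if_open_vanishing[OF \<open>open S\<close>] that by blast
  note vanish_S = \<open>\<And>r. r \<in> S \<Longrightarrow> f r = 0\<close> \<open>\<And>r. r \<in> S \<Longrightarrow> vd f r = 0\<close> this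
  show ?thesis
  proof
    \<comment> \<open>Enlarging [a, b] makes f, f' and f'' vanish at the endpoints, killing boundary terms.\<close>
    show "0 < a / 2" "a / 2 \<le> b + 1" using ab by auto
    show "(f has_vector_derivative vd f r) (at r)" "(vd f has_vector_derivative vd (vd f) r) (at r)"
      if "r > 0" for r
      using diff[OF that] by (simp_all add: vd_def vector_derivative_works[symmetric])
    have "continuous_on {a / 2..b + 1} g" if "\<And>r. r > 0 \<Longrightarrow> g differentiable (at r)" for g
      using ab(1) that
      by (intro continuous_at_imp_continuous_on ballI differentiable_imp_continuous_within) auto
    then show "continuous_on {a / 2..b + 1} f" "continuous_on {a / 2..b + 1} (vd f)"
      "continuous_on {a / 2..b + 1} (vd (vd f))"
      using diff by blast+
    show "f r = 0 \<and> vd f r = 0 \<and> vd (vd f) r = 0" if "r > 0" "r \<notin> {a / 2<..<b + 1}" for r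
      using that ab(1) by (intro conjI vanish_S) (auto simp: S_def)
  qed
qed

lemma wnorm2_lincomb_derivs:
  fixes f \<phi> :: "real \<Rightarrow> complex"
  assumes "smooth_compact_pos f"
    and \<phi>: "\<And>r. r > 0 \<Longrightarrow> \<phi> r = of_real a * vd (vd f) r + of_real (b / r) * vd f r + of_real (e / r\<^sup>2) * f r"
  shows "wnorm2 \<beta> \<phi> = a\<^sup>2 * wnorm2 \<beta> (vd (vd f))
      + (b\<^sup>2 - a * b * (\<beta> - 1) - 2 * a * e) * wnorm2 (\<beta> - 2) (vd f)
      + (e\<^sup>2 + a * e * (\<beta> - 2) * (\<beta> - 3) - b * e * (\<beta> - 3)) * wnorm2 (\<beta> - 4) f"
proof -
  obtain c d where c: "0 < c" "c \<le> d"
    and f': "\<And>r. r > 0 \<Longrightarrow> (f has_vector_derivative vd f r) (at r)"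
    and f'': "\<And>r. r > 0 \<Longrightarrow> (vd f has_vector_derivative vd (vd f) r) (at r)"
    and cont: "continuous_on {c..d} f" "continuous_on {c..d} (vd f)" "continuous_on {c..d} (vd (vd f))"
    and vanish: "\<And>r. r > 0 \<Longrightarrow> r \<notin> {c<..<d} \<Longrightarrow> f r = 0 \<and> vd f r = 0 \<and> vd (vd f) r = 0"
    using smooth_compact_posE[OF assms(1)] by blast
  define A B where "A = wprod (\<beta> - 4) f f" and "B = wprod (\<beta> - 2) (vd f) (vd f)"
  have E: "wprod (\<beta> - 3) (vd f) f = - (\<beta> - 3) / 2 * A"
    using wprod_deriv_self[OF c f' cont(2)] vanish by (simp add: A_def field_simps)
  have G: "wprod (\<beta> - 1) (vd (vd f)) (vd f) = - (\<beta> - 1) / 2 * B"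
    using wprod_deriv_self[OF c f'' cont(3)] vanish by (simp add: B_def field_simps)
  have "wprod (\<beta> - 2) (vd (vd f)) f + B = - (\<beta> - 2) * wprod (\<beta> - 3) (vd f) f"
    using wprod_by_parts[OF c f'' f' cont(3,2)] vanish by (simp add: B_def algebra_simps)
  then have F: "wprod (\<beta> - 2) (vd (vd f)) f = (\<beta> - 2) * (\<beta> - 3) / 2 * A - B"
    unfolding E by (simp add: field_simps)
  have "wnorm2 \<beta> \<phi> = a\<^sup>2 * wprod \<beta> (vd (vd f)) (vd (vd f)) + b\<^sup>2 * B + e\<^sup>2 * A
      + 2 * a * b * wprod (\<beta> - 1) (vd (vd f)) (vd f) + 2 * a * e * wprod (\<beta> - 2) (vd (vd f)) f
      + 2 * b * e * wprod (\<beta> - 3) (vd f) f"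
    unfolding A_def B_def using vanish by (intro wnorm2_lincomb[OF c(1) cont] \<phi>) auto
  then show ?thesis
    unfolding E F G wnorm2_eq_wprod A_def B_def by (simp add: field_simps power2_eq_square)
qed

theorem theorem1p2:
  fixes \<alpha> \<beta> :: real and f :: "real \<Rightarrow> complex"
  assumes "\<beta> - \<alpha> - 2 \<noteq> 0"
    and "smooth_compact_pos f"
  shows "(Cab \<alpha> \<beta>)\<^sup>2 * wnorm2 \<beta> (\<lambda>r. f r / complex_of_real (r\<^sup>2))
     = wnorm2 \<beta> (Lop \<alpha> f)
       - (1 + 2 * Cab \<alpha> \<beta> / (\<beta> - \<alpha> - 2)\<^sup>2)
           * wnorm2 \<beta> (\<lambda>r. Lop \<alpha> f r + complex_of_real (Cab \<alpha> \<beta>) * (f r / complex_of_real (r\<^sup>2)))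
       + 2 * Cab \<alpha> \<beta> / (\<beta> - \<alpha> - 2)\<^sup>2 * wnorm2 \<beta> (fsharp \<beta> f)"
proof -
  note expand = wnorm2_lincomb_derivs[OF assms(2), where \<beta> = \<beta>]
  have "f r / complex_of_real (r\<^sup>2)
      = of_real 0 * vd (vd f) r + of_real (0 / r) * vd f r + of_real (1 / r\<^sup>2) * f r" for r
    by simp
  note norm_f = expand[OF this]
  have "Lop \<alpha> f r = of_real 1 * vd (vd f) r + of_real (\<alpha> / r) * vd f r + of_real (0 / r\<^sup>2) * f r" for r
    by (simp add: Lop_def)
  note norm_L = expand[OF this]
  have "Lop \<alpha> f r + complex_of_real (Cab \<alpha> \<beta>) * (f r / complex_of_real (r\<^sup>2))
      = of_real 1 * vd (vd f) r + of_real (\<alpha> / r) * vd f r + of_real (Cab \<alpha> \<beta> / r\<^sup>2) * f r" for r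
    by (simp add: Lop_def)
  note norm_LC = expand[OF this]
  have "fsharp \<beta> f r
      = of_real 1 * vd (vd f) r + of_real ((\<beta> - 2) / r) * vd f r + of_real ((\<beta> - 3)\<^sup>2 / 4 / r\<^sup>2) * f r" for r
    by (simp add: fsharp_def)
  note norm_sharp = expand[OF this]
  have "(\<beta> - \<alpha> - 2)\<^sup>2 \<noteq> 0" using assms(1) by simp
  then show ?thesis
    unfolding norm_f norm_L norm_LC norm_sharp unfolding Cab_def
    by (simp add: field_simps) algebra
qed

end
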